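(* For every $n\geq 2$, the ladder graph $L_n$ satisfies $\mathcal{R}(L_n)=2$. Consequently, every ladder graph $L_n$ ($n\geq 1$) is a circle graph.
   Context: All graphs are finite and simple. For a word $w$ and distinct letters $x,y$ occurring in $w$, $x$ and $y$ alternate in $w$ if deleting all letters other than copies of $x$ and $y$ yields a word of the form $xyxy\cdots$ or $yxyx\cdots$ (of even or odd length). A graph $G=(V,E)$ is word-representable if there is a word $w$ over $V$ (each vertex occurring in $w$) such that for all distinct $x,y\in V$, $x$ and $y$ alternate in $w$ iff $(x,y)\in E$. A word is $k$-uniform if each letter occurs exactly $k$ times; $G$ is $k$-word-representable if some $k$-uniform word represents it; the representation number $\mathcal{R}(G)$ is the least such $k$. The ladder graph $L_n$ has vertices $1,\ldots,n,1',\ldots,n'$ and the $3n-2$ edges $(i,i+1)$ and $(i',(i+1)')$ for $1\leq i\leq n-1$ and $(i,i')$ for $1\leq i\leq n$. A circle graph is a graph whose vertices can be associated with chords of a circle so that two vertices are adjacent iff their chords cross. *)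

theory Defs
  imports "HOL-Analysis.Analysis"
begin

text \<open>A graph is given by a finite vertex set V and an adjacency predicate adj
  (only its values on distinct vertices of V matter).\<close>

definition alternate :: "'a list \<Rightarrow> 'a \<Rightarrow> 'a \<Rightarrow> bool" where
  "alternate w x y \<longleftrightarrow>
     (\<exists>m. filter (\<lambda>z. z = x \<or> z = y) w = map (\<lambda>i. if even i then x else y) [0..<m]
        \<or> filter (\<lambda>z. z = x \<or> z = y) w = map (\<lambda>i. if even i then y else x) [0..<m])"

definition word_represents :: "'a set \<Rightarrow> ('a \<Rightarrow> 'a \<Rightarrow> bool) \<Rightarrow> 'a list \<Rightarrow> bool" where
  "word_represents V adj w \<longleftrightarrow> set w = V \<and>
     (\<forall>x\<in>V. \<forall>y\<in>V. x \<noteq> y \<longrightarrow> (alternate w x y \<longleftrightarrow> adj x y))"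

definition uniform_word :: "nat \<Rightarrow> 'a list \<Rightarrow> bool" where
  "uniform_word k w \<longleftrightarrow> (\<forall>x\<in>set w. count_list w x = k)"

definition k_word_representable :: "'a set \<Rightarrow> ('a \<Rightarrow> 'a \<Rightarrow> bool) \<Rightarrow> nat \<Rightarrow> bool" where
  "k_word_representable V adj k \<longleftrightarrow> (\<exists>w. uniform_word k w \<and> word_represents V adj w)"

definition rep_number :: "'a set \<Rightarrow> ('a \<Rightarrow> 'a \<Rightarrow> bool) \<Rightarrow> nat" where
  "rep_number V adj = (LEAST k. k_word_representable V adj k)"

text \<open>Ladder graph: vertex (i,False) is i, vertex (i,True) is i'.\<close>

definition ladder_V :: "nat \<Rightarrow> (nat \<times> bool) set" where
  "ladder_V n = {(i, b). 1 \<le> i \<and> i \<le> n}"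

definition ladder_adj :: "nat \<Rightarrow> nat \<times> bool \<Rightarrow> nat \<times> bool \<Rightarrow> bool" where
  "ladder_adj n u v \<longleftrightarrow> u \<in> ladder_V n \<and> v \<in> ladder_V n \<and>
     ((snd u = snd v \<and> (fst v = fst u + 1 \<or> fst u = fst v + 1)) \<or>
      (fst u = fst v \<and> snd u \<noteq> snd v))"

definition circle_graph :: "'a set \<Rightarrow> ('a \<Rightarrow> 'a \<Rightarrow> bool) \<Rightarrow> bool" where
  "circle_graph V adj \<longleftrightarrow> (\<exists>p q :: 'a \<Rightarrow> complex.
     (\<forall>v\<in>V. cmod (p v) = 1 \<and> cmod (q v) = 1 \<and> p v \<noteq> q v) \<and>
     (\<forall>u\<in>V. \<forall>v\<in>V. u \<noteq> v \<longrightarrow> {p u, q u} \<inter> {p v, q v} = {}) \<and>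
     (\<forall>u\<in>V. \<forall>v\<in>V. u \<noteq> v \<longrightarrow>
        (adj u v \<longleftrightarrow> closed_segment (p u) (q u) \<inter> closed_segment (p v) (q v) \<noteq> {})))"

end

theory Submission
  imports Defs
begin

text \<open>The ladder is a permutation graph: its vertices admit two linear orders in which
  two distinct vertices appear in the same relative order exactly when they are adjacent.
  Writing the vertices in the first order and then in the second gives a 2-uniform word
  in which two letters alternate iff they keep their relative order, so the word represents
  the ladder. A 1-uniform word represents a complete graph, and \<open>L\<^sub>n\<close> with \<open>n \<ge> 2\<close> is not
  complete, so the representation number is exactly 2. Placing the first order on an arc of
  the unit circle and the second order on the following arc, the chord joining the two
  positions of a vertex crosses the chord of another vertex iff their endpoints interleave,
  i.e. iff the two vertices keep their relative order; hence every ladder is a circle graph.\<close>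

lemma distinct_if_sorted_wrt_key:
  fixes f :: "'a \<Rightarrow> 'b::linorder"
  shows "sorted_wrt (\<lambda>a b. f a < f b) xs \<Longrightarrow> distinct xs"
  by (induction xs) auto

lemma filter_pair_sorted_wrt_key:
  fixes f :: "'a \<Rightarrow> 'b::linorder"
  assumes sorted: "sorted_wrt (\<lambda>a b. f a < f b) xs"
    and "x \<in> set xs" "y \<in> set xs" "f x < f y"
  shows "filter (\<lambda>z. z = x \<or> z = y) xs = [x, y]"
proof -
  let ?l = "filter (\<lambda>z. z = x \<or> z = y) xs"
  have l_sorted: "sorted_wrt (\<lambda>a b. f a < f b) ?l"
    using sorted by (simp add: sorted_wrt_filter)
  have l_set: "set ?l = {x, y}" using assms by auto
  have "length ?l = 2"
    using distinct_card[OF distinct_if_sorted_wrt_key[OF l_sorted]] l_set \<open>f x < f y\<close>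
    by (metis card_2_iff less_irrefl length_remdups_card_conv)
  then obtain a b where ab: "?l = [a, b]"
    by (auto simp: length_Suc_conv numeral_2_eq_2)
  have "f a < f b" "{a, b} = {x, y}" using l_sorted l_set unfolding ab by auto
  then show ?thesis using \<open>f x < f y\<close> unfolding ab doubleton_eq_iff by auto
qed

lemma count_list_eq_1_if_distinct: "distinct xs \<Longrightarrow> x \<in> set xs \<Longrightarrow> count_list xs x = 1"
  by (induction xs) auto

lemma length_filter_pair:
  "x \<noteq> y \<Longrightarrow> length (filter (\<lambda>z. z = x \<or> z = y) w) = count_list w x + count_list w y"
  by (induction w) auto

text \<open>Stated in the class context: a locale interpretation made outside it would produce the
  unfolded locale constant instead of \<open>sorted_key_list_of_set\<close>.\<close>

context linorder
begin

lemma sorted_key_list_of_set_sorted_wrt: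
  fixes f :: "'b \<Rightarrow> 'a"
  assumes "finite V" "inj_on f V"
  shows "set (sorted_key_list_of_set f V) = V"
    and "sorted_wrt (\<lambda>a b. f a < f b) (sorted_key_list_of_set f V)"
proof -
  interpret folding_insort_key "(\<le>)" "(<)" V f by unfold_locales (fact assms(2))
  show "set (sorted_key_list_of_set f V) = V" using assms(1) by simp
  show "sorted_wrt (\<lambda>a b. f a < f b) (sorted_key_list_of_set f V)"
    using strict_sorted_key_list_of_set[of V] by (simp add: sorted_wrt_map)
qed

end

section \<open>Alternation and the representation number\<close>

lemma alternate_commute: "alternate w x y \<longleftrightarrow> alternate w y x"
proof -
  have "(\<lambda>z. z = x \<or> z = y) = (\<lambda>z. z = y \<or> z = x)" by auto
  then show ?thesis unfolding alternate_def by metis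
qed

lemma alternate_if_filter_eq:
  "filter (\<lambda>z. z = x \<or> z = y) w = [x, y, x, y] \<Longrightarrow> alternate w x y"
  unfolding alternate_def by (intro exI[of _ 4]) (simp add: upt_rec)

lemma not_alternate_if_filter_eq:
  assumes "x \<noteq> y" "filter (\<lambda>z. z = x \<or> z = y) w = [x, y, y, x]"
  shows "\<not> alternate w x y"
proof
  assume "alternate w x y"
  then obtain m :: nat where m:
    "[x, y, y, x] = map (\<lambda>i. if even i then x else y) [0..<m] \<or>
     [x, y, y, x] = map (\<lambda>i. if even i then y else x) [0..<m]"
    unfolding alternate_def assms(2) by metis
  then have "m = 4" by (auto dest: arg_cong[where f = length])
  with m show False using assms(1) by (simp add: upt_rec)
qed

lemma alternate_if_uniform_word_1:
  assumes "uniform_word 1 w" "x \<in> set w" "y \<in> set w" "x \<noteq> y"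
  shows "alternate w x y"
proof -
  let ?l = "filter (\<lambda>z. z = x \<or> z = y) w"
  have "length ?l = 2"
    using assms length_filter_pair[of x y w] by (simp add: uniform_word_def)
  then obtain a b where ab: "?l = [a, b]"
    by (auto simp: length_Suc_conv numeral_2_eq_2)
  have "set ?l = {x, y}" using assms(2,3) by auto
  then have "{a, b} = {x, y}" unfolding ab by simp
  then have "?l = [x, y] \<or> ?l = [y, x]" using ab by (auto simp: doubleton_eq_iff)
  then show ?thesis unfolding alternate_def
    by (intro exI[of _ 2]) (auto simp: upt_rec)
qed

lemma k_word_representable_ge_2:
  assumes "k_word_representable V adj k" "x \<in> V" "y \<in> V" "x \<noteq> y" "\<not> adj x y"
  shows "2 \<le> k"
proof -
  obtain w where w: "uniform_word k w" "word_represents V adj w"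
    using assms(1) unfolding k_word_representable_def by blast
  have set_w: "set w = V" using w(2) by (simp add: word_represents_def)
  then have "k = count_list w x" using w(1) assms(2) by (simp add: uniform_word_def)
  also have "\<dots> \<noteq> 0" using set_w assms(2) by (simp add: count_list_0_iff)
  finally have "k \<noteq> 0" .
  moreover have "k \<noteq> 1"
  proof
    assume "k = 1"
    then have "alternate w x y"
      using alternate_if_uniform_word_1[of w x y] w(1) set_w assms(2-4) by simp
    then show False using w(2) assms(2-5) by (simp add: word_represents_def)
  qed
  ultimately show ?thesis by simp
qed

lemma rep_number_eq_2:
  assumes "k_word_representable V adj 2" "x \<in> V" "y \<in> V" "x \<noteq> y" "\<not> adj x y"
  shows "rep_number V adj = 2"
  unfolding rep_number_def
proof (rule Least_equality)
  show "k_word_representable V adj 2" by (fact assms(1))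
  show "2 \<le> k" if "k_word_representable V adj k" for k
    using k_word_representable_ge_2[OF that assms(2-5)] .
qed

section \<open>Permutation graphs are 2-word-representable\<close>

definition permutation_model ::
    "'a set \<Rightarrow> ('a \<Rightarrow> 'a \<Rightarrow> bool) \<Rightarrow> ('a \<Rightarrow> 'b::linorder) \<Rightarrow> ('a \<Rightarrow> 'b) \<Rightarrow> bool" where
  "permutation_model V adj f g \<longleftrightarrow> inj_on f V \<and> inj_on g V \<and>
     (\<forall>u\<in>V. \<forall>v\<in>V. u \<noteq> v \<longrightarrow> (adj u v \<longleftrightarrow> (f u < f v \<longleftrightarrow> g u < g v)))"

lemma permutation_model_comp_strict_mono:
  assumes "strict_mono h" "permutation_model V adj f g"
  shows "permutation_model V adj (h \<circ> f) (h \<circ> g)"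
  using assms unfolding permutation_model_def
  by (auto simp: strict_mono_less intro!: comp_inj_on strict_mono_imp_inj_on)

definition two_order_word :: "('a \<Rightarrow> 'b::linorder) \<Rightarrow> ('a \<Rightarrow> 'b) \<Rightarrow> 'a set \<Rightarrow> 'a list" where
  "two_order_word f g V = sorted_key_list_of_set f V @ sorted_key_list_of_set g V"

lemma filter_pair_two_order_word:
  fixes f g :: "'a \<Rightarrow> 'b::linorder"
  assumes "finite V" "inj_on f V" "inj_on g V" "x \<in> V" "y \<in> V" "f x < f y"
  shows "filter (\<lambda>z. z = x \<or> z = y) (two_order_word f g V) =
    [x, y] @ (if g x < g y then [x, y] else [y, x])"
proof -
  note f_list = sorted_key_list_of_set_sorted_wrt[OF assms(1,2)]
  note g_list = sorted_key_list_of_set_sorted_wrt[OF assms(1,3)]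
  have f_part: "filter (\<lambda>z. z = x \<or> z = y) (sorted_key_list_of_set f V) = [x, y]"
    using filter_pair_sorted_wrt_key[OF f_list(2)] f_list(1) assms(4-6) by simp
  have "g x \<noteq> g y" using assms(3-6) by (auto dest: inj_onD)
  then consider "g x < g y" | "g y < g x" by (rule linorder_neqE)
  then have g_part: "filter (\<lambda>z. z = x \<or> z = y) (sorted_key_list_of_set g V) =
      (if g x < g y then [x, y] else [y, x])"
  proof cases
    case 1
    then show ?thesis using filter_pair_sorted_wrt_key[OF g_list(2)] g_list(1) assms(4,5) by simp
  next
    case 2
    have "(\<lambda>z. z = x \<or> z = y) = (\<lambda>z. z = y \<or> z = x)" by auto
    then show ?thesis
      using 2 filter_pair_sorted_wrt_key[OF g_list(2), of y x] g_list(1) assms(4,5)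
      by (simp add: less_not_sym)
  qed
  show ?thesis using f_part g_part by (simp add: two_order_word_def)
qed

lemma alternate_two_order_word_iff:
  fixes f g :: "'a \<Rightarrow> 'b::linorder"
  assumes "finite V" "inj_on f V" "inj_on g V" "x \<in> V" "y \<in> V" "x \<noteq> y"
  shows "alternate (two_order_word f g V) x y \<longleftrightarrow> (f x < f y \<longleftrightarrow> g x < g y)"
proof -
  have alternate_iff_second_order: "alternate (two_order_word f g V) a b \<longleftrightarrow> (g a < g b)"
    if "a \<in> V" "b \<in> V" "f a < f b" for a b
  proof (cases "g a < g b")
    case True
    then have "filter (\<lambda>z. z = a \<or> z = b) (two_order_word f g V) = [a, b, a, b]"
      using filter_pair_two_order_word[OF assms(1-3) that] by simp
    then show ?thesis using True by (simp add: alternate_if_filter_eq)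
  next
    case False
    then have "filter (\<lambda>z. z = a \<or> z = b) (two_order_word f g V) = [a, b, b, a]"
      using filter_pair_two_order_word[OF assms(1-3) that] by simp
    moreover have "a \<noteq> b" using that(3) by auto
    ultimately show ?thesis using False by (simp add: not_alternate_if_filter_eq)
  qed
  have "f x \<noteq> f y" "g x \<noteq> g y" using assms(2-6) by (auto dest: inj_onD)
  show ?thesis
  proof (cases "f x < f y")
    case True
    then show ?thesis using alternate_iff_second_order[of x y] assms(4,5) by simp
  next
    case False
    then have "f y < f x" using \<open>f x \<noteq> f y\<close> by simp
    have "alternate (two_order_word f g V) x y \<longleftrightarrow> alternate (two_order_word f g V) y x"
      by (rule alternate_commute)
    also have "\<dots> \<longleftrightarrow> g y < g x" using alternate_iff_second_order \<open>f y < f x\<close> assms(4,5) by blast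
    finally show ?thesis using False \<open>g x \<noteq> g y\<close> by auto
  qed
qed

theorem k_word_representable_2_if_permutation_model:
  assumes "finite V" "permutation_model V adj f g"
  shows "k_word_representable V adj 2"
  unfolding k_word_representable_def
proof (intro exI conjI)
  have inj: "inj_on f V" "inj_on g V" using assms(2) by (simp_all add: permutation_model_def)
  note f_list = sorted_key_list_of_set_sorted_wrt[OF assms(1) inj(1)]
  note g_list = sorted_key_list_of_set_sorted_wrt[OF assms(1) inj(2)]
  have set_word: "set (two_order_word f g V) = V"
    using f_list(1) g_list(1) by (simp add: two_order_word_def)
  have "distinct (sorted_key_list_of_set f V)" "distinct (sorted_key_list_of_set g V)"
    using f_list(2) g_list(2) by (simp_all add: distinct_if_sorted_wrt_key)
  then show "uniform_word 2 (two_order_word f g V)"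
    using f_list(1) g_list(1)
    by (simp add: uniform_word_def two_order_word_def count_list_eq_1_if_distinct)
  show "word_represents V adj (two_order_word f g V)"
    unfolding word_represents_def
  proof (intro conjI ballI impI)
    fix x y assume "x \<in> V" "y \<in> V" "x \<noteq> y"
    then show "alternate (two_order_word f g V) x y \<longleftrightarrow> adj x y"
      using alternate_two_order_word_iff[OF assms(1) inj] assms(2)
      unfolding permutation_model_def by blast
  qed (fact set_word)
qed

section \<open>Chords of the unit circle\<close>

definition orient :: "complex \<Rightarrow> complex \<Rightarrow> complex \<Rightarrow> real" where
  "orient A B C = Re (B - A) * Im (C - A) - Im (B - A) * Re (C - A)"

lemma orient_combination:
  "orient A B ((1 - v) *\<^sub>R C + v *\<^sub>R D) = (1 - v) * orient A B C + v * orient A B D"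
  unfolding orient_def by (simp add: algebra_simps)

lemma orient_on_line: "orient A B ((1 - v) *\<^sub>R A + v *\<^sub>R B) = 0"
  unfolding orient_def by (simp add: algebra_simps)

lemma closed_segments_disjoint_if_same_side:
  assumes "0 < orient A B C * orient A B D"
  shows "closed_segment A B \<inter> closed_segment C D = {}"
proof (rule ccontr)
  assume "closed_segment A B \<inter> closed_segment C D \<noteq> {}"
  then obtain X where X: "X \<in> closed_segment A B" "X \<in> closed_segment C D" by blast
  from X(1) obtain u where u: "X = (1 - u) *\<^sub>R A + u *\<^sub>R B" by (auto simp: in_segment)
  from X(2) obtain v where v: "0 \<le> v" "v \<le> 1" "X = (1 - v) *\<^sub>R C + v *\<^sub>R D"
    by (auto simp: in_segment)
  have X_side: "orient A B X = (1 - v) * orient A B C + v * orient A B D"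
    using v(3) by (simp add: orient_combination)
  have "0 = orient A B C * orient A B X" using u by (simp add: orient_on_line)
  also have "\<dots> = (1 - v) * (orient A B C)\<^sup>2 + v * (orient A B C * orient A B D)"
    unfolding X_side by (simp add: algebra_simps power2_eq_square)
  also have "\<dots> > 0"
  proof -
    have "(1 - v) * - (orient A B C)\<^sup>2 + v * - (orient A B C * orient A B D) < 0"
      using assms v by (intro convex_bound_lt) (auto simp: mult_eq_0_iff)
    then show ?thesis by simp
  qed
  finally show False by simp
qed

lemma closed_segments_intersect_if_opposite_sides:
  assumes "orient A B C < 0" "0 < orient A B D" "orient C D B < 0" "0 < orient C D A"
  shows "closed_segment A B \<inter> closed_segment C D \<noteq> {}"
proof -
  define l where "l = orient A B C / (orient A B C - orient A B D)"
  define m where "m = orient C D A / (orient C D A - orient C D B)"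
  have l: "0 \<le> l" "l \<le> 1" and m: "0 \<le> m" "m \<le> 1"
    using assms unfolding l_def m_def by (auto simp: divide_simps)
  have "orient A B C - orient A B D \<noteq> 0" "orient C D A - orient C D B \<noteq> 0"
    using assms by auto
  then have "(1 - l) *\<^sub>R C + l *\<^sub>R D = (1 - m) *\<^sub>R A + m *\<^sub>R B"
    unfolding l_def m_def orient_def by (simp add: complex_eq_iff field_simps)
  moreover have "(1 - l) *\<^sub>R C + l *\<^sub>R D \<in> closed_segment C D" using l by (auto simp: in_segment)
  moreover have "(1 - m) *\<^sub>R A + m *\<^sub>R B \<in> closed_segment A B" using m by (auto simp: in_segment)
  ultimately show ?thesis by auto
qed

text \<open>Rational parametrisation of the unit circle without \<open>-1\<close>. It runs around the circle
  monotonically in \<open>t\<close>, so two chords cross iff their parameter intervals interleave.\<close>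

definition circle_param :: "real \<Rightarrow> complex" where
  "circle_param t = Complex ((1 - t\<^sup>2) / (1 + t\<^sup>2)) (2 * t / (1 + t\<^sup>2))"

lemma norm_circle_param [simp]: "cmod (circle_param t) = 1"
proof -
  have "1 + t\<^sup>2 > 0" by (simp add: add_pos_nonneg)
  then have "(cmod (circle_param t))\<^sup>2 = 1"
    unfolding cmod_power2 circle_param_def by (simp add: field_simps) algebra
  then show ?thesis using norm_ge_zero[of "circle_param t"] by (simp add: power2_eq_1_iff)
qed

lemma circle_param_eq_iff [simp]: "circle_param a = circle_param b \<longleftrightarrow> a = b"
proof
  assume eq: "circle_param a = circle_param b"
  have pos: "1 + a\<^sup>2 > 0" "1 + b\<^sup>2 > 0" by (simp_all add: add_pos_nonneg)
  have "Re (circle_param a) = Re (circle_param b)" "Im (circle_param a) = Im (circle_param b)"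
    using eq by simp_all
  then have "(1 - a\<^sup>2) * (1 + b\<^sup>2) = (1 - b\<^sup>2) * (1 + a\<^sup>2)" and "a * (1 + b\<^sup>2) = b * (1 + a\<^sup>2)"
    unfolding circle_param_def using pos by (simp_all add: field_simps)
  then have "a * (1 + a\<^sup>2) = b * (1 + a\<^sup>2)" by (simp add: algebra_simps)
  then show "a = b" using pos by simp
qed simp

lemma orient_circle_param:
  "orient (circle_param r) (circle_param s) (circle_param u) =
    4 * ((s - r) * (u - s) * (u - r)) / ((1 + r\<^sup>2) * (1 + s\<^sup>2) * (1 + u\<^sup>2))"
proof -
  have "1 + r\<^sup>2 > 0" "1 + s\<^sup>2 > 0" "1 + u\<^sup>2 > 0" by (simp_all add: add_pos_nonneg)
  then show ?thesis unfolding orient_def circle_param_def by (simp add: divide_simps) algebra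
qed

lemma orient_circle_param_pos_iff:
  "0 < orient (circle_param r) (circle_param s) (circle_param u) \<longleftrightarrow> 0 < (s - r) * (u - s) * (u - r)"
proof -
  have "0 < 4 * p / D \<longleftrightarrow> 0 < p" if "0 < D" for p D :: real
    using that by (simp add: zero_less_divide_iff)
  moreover have "0 < (1 + r\<^sup>2) * (1 + s\<^sup>2) * (1 + u\<^sup>2)" by (simp add: add_pos_nonneg)
  ultimately show ?thesis unfolding orient_circle_param by blast
qed

lemma orient_circle_param_neg_iff:
  "orient (circle_param r) (circle_param s) (circle_param u) < 0 \<longleftrightarrow> (s - r) * (u - s) * (u - r) < 0"
proof -
  have "4 * p / D < 0 \<longleftrightarrow> p < 0" if "0 < D" for p D :: real
    using that by (simp add: divide_less_0_iff)
  moreover have "0 < (1 + r\<^sup>2) * (1 + s\<^sup>2) * (1 + u\<^sup>2)" by (simp add: add_pos_nonneg)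
  ultimately show ?thesis unfolding orient_circle_param by blast
qed

lemma circle_chords_cross:
  fixes a b c d :: real
  assumes "a < c" "c < b" "b < d"
  shows "closed_segment (circle_param a) (circle_param b) \<inter>
    closed_segment (circle_param c) (circle_param d) \<noteq> {}"
proof (rule closed_segments_intersect_if_opposite_sides)
  show "orient (circle_param a) (circle_param b) (circle_param c) < 0"
    using assms by (auto simp: orient_circle_param_neg_iff mult_less_0_iff zero_less_mult_iff)
  show "0 < orient (circle_param a) (circle_param b) (circle_param d)"
    using assms by (auto simp: orient_circle_param_pos_iff mult_less_0_iff zero_less_mult_iff)
  show "orient (circle_param c) (circle_param d) (circle_param b) < 0"
    using assms by (auto simp: orient_circle_param_neg_iff mult_less_0_iff zero_less_mult_iff)
  show "0 < orient (circle_param c) (circle_param d) (circle_param a)"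
    using assms by (auto simp: orient_circle_param_pos_iff mult_less_0_iff zero_less_mult_iff)
qed

lemma circle_chords_nested:
  fixes a b c d :: real
  assumes "a < c" "c < d" "d < b"
  shows "closed_segment (circle_param a) (circle_param b) \<inter>
    closed_segment (circle_param c) (circle_param d) = {}"
proof (rule closed_segments_disjoint_if_same_side, rule mult_neg_neg)
  show "orient (circle_param a) (circle_param b) (circle_param c) < 0"
    using assms by (auto simp: orient_circle_param_neg_iff mult_less_0_iff zero_less_mult_iff)
  show "orient (circle_param a) (circle_param b) (circle_param d) < 0"
    using assms by (auto simp: orient_circle_param_neg_iff mult_less_0_iff zero_less_mult_iff)
qed

lemma circle_chords_intersect_iff:
  fixes a b c d :: real
  assumes "a < b" "c < d" "a < d" "c < b" "a \<noteq> c" "b \<noteq> d"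
  shows "closed_segment (circle_param a) (circle_param b) \<inter>
      closed_segment (circle_param c) (circle_param d) \<noteq> {} \<longleftrightarrow> (a < c \<longleftrightarrow> b < d)"
proof (cases "a < c")
  case True
  then show ?thesis
    using circle_chords_cross[of a c b d] circle_chords_nested[of a c d b] assms
    by (cases "b < d") auto
next
  case False
  then show ?thesis
    using circle_chords_cross[of c a d b] circle_chords_nested[of c a b d] assms
    by (cases "b < d") (auto simp: Int_commute)
qed

theorem circle_graph_if_permutation_model:
  fixes f g :: "'a \<Rightarrow> real"
  assumes "finite V" "permutation_model V adj f g"
  shows "circle_graph V adj"
proof -
  have inj: "inj_on f V" "inj_on g V"
    and adj: "\<And>u v. u \<in> V \<Longrightarrow> v \<in> V \<Longrightarrow> u \<noteq> v \<Longrightarrow> adj u v \<longleftrightarrow> (f u < f v \<longleftrightarrow> g u < g v)"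
    using assms(2) by (auto simp: permutation_model_def)
  define c where "c = 1 + (\<Sum>v\<in>V. \<bar>f v\<bar> + \<bar>g v\<bar>)"
  define h where "h v = g v + 2 * c" for v
  have bound: "\<bar>f v\<bar> < c" "\<bar>g v\<bar> < c" if "v \<in> V" for v
    using member_le_sum[of v V "\<lambda>v. \<bar>f v\<bar> + \<bar>g v\<bar>"] that assms(1) by (auto simp: c_def)
  have f_less_h: "f u < h v" if "u \<in> V" "v \<in> V" for u v
    using bound[OF that(1)] bound[OF that(2)] by (auto simp: h_def)
  show ?thesis
    unfolding circle_graph_def
  proof (intro exI conjI ballI impI)
    fix v assume "v \<in> V"
    then show "cmod (circle_param (f v)) = 1" "cmod (circle_param (h v)) = 1"
      "circle_param (f v) \<noteq> circle_param (h v)"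
      using f_less_h[of v v] by auto
  next
    fix u v assume uv: "u \<in> V" "v \<in> V" "u \<noteq> v"
    have "f u \<noteq> f v" "h u \<noteq> h v" using inj uv by (auto simp: h_def dest: inj_onD)
    then show "{circle_param (f u), circle_param (h u)} \<inter> {circle_param (f v), circle_param (h v)} = {}"
      using f_less_h[of u v] f_less_h[of v u] uv by auto
    have "closed_segment (circle_param (f u)) (circle_param (h u)) \<inter>
        closed_segment (circle_param (f v)) (circle_param (h v)) \<noteq> {} \<longleftrightarrow>
        (f u < f v \<longleftrightarrow> h u < h v)"
      using f_less_h uv \<open>f u \<noteq> f v\<close> \<open>h u \<noteq> h v\<close> by (intro circle_chords_intersect_iff) auto
    also have "\<dots> \<longleftrightarrow> adj u v" using adj[OF uv] by (simp add: h_def)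
    finally show "adj u v \<longleftrightarrow> closed_segment (circle_param (f u)) (circle_param (h u)) \<inter>
        closed_segment (circle_param (f v)) (circle_param (h v)) \<noteq> {}" by simp
  qed
qed

section \<open>The ladder\<close>

text \<open>Call \<open>(i, odd i)\<close> the upper and \<open>(i, even i)\<close> the lower vertex of rung \<open>i\<close>; the
  non-rung edges join an upper and a lower vertex of consecutive rungs. The first key lists the
  lower vertices of rungs 1 and 2, then alternately the upper vertex of rung \<open>i\<close> and the lower
  vertex of rung \<open>i + 2\<close>; the second key is the same pattern with the rungs taken in reverse
  order. Exactly the non-adjacent pairs are inverted.\<close>

definition ladder_key1 :: "nat \<times> bool \<Rightarrow> int" where
  "ladder_key1 v = (if snd v = odd (fst v) then 2 * int (fst v) else 2 * int (fst v) - 3)"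

definition ladder_key2 :: "nat \<times> bool \<Rightarrow> int" where
  "ladder_key2 v = (if snd v = odd (fst v) then 3 - 2 * int (fst v) else - 2 * int (fst v))"

lemma inj_ladder_key1: "inj ladder_key1"
  unfolding inj_on_def ladder_key1_def by auto presburger+

lemma inj_ladder_key2: "inj ladder_key2"
  unfolding inj_on_def ladder_key2_def by auto presburger+

lemma ladder_adj_iff_keys:
  assumes "u \<in> ladder_V n" "v \<in> ladder_V n" "u \<noteq> v"
  shows "ladder_adj n u v \<longleftrightarrow> (ladder_key1 u < ladder_key1 v \<longleftrightarrow> ladder_key2 u < ladder_key2 v)"
proof -
  obtain i b where u: "u = (i, b)" by (cases u)
  obtain j c where v: "v = (j, c)" by (cases v)
  show ?thesis
    using assms unfolding u v ladder_adj_def ladder_V_def ladder_key1_def ladder_key2_def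
    by (auto split: if_splits) presburger+
qed

lemma permutation_model_ladder:
  "permutation_model (ladder_V n) (ladder_adj n) ladder_key1 ladder_key2"
  unfolding permutation_model_def
  using inj_ladder_key1 inj_ladder_key2 ladder_adj_iff_keys by (auto intro: inj_on_subset)

lemma finite_ladder_V: "finite (ladder_V n)"
  by (rule finite_subset[of _ "{1..n} \<times> UNIV"]) (auto simp: ladder_V_def)

theorem theorem19:
  shows "(\<forall>n\<ge>2. k_word_representable (ladder_V n) (ladder_adj n) 2 \<and>
                 rep_number (ladder_V n) (ladder_adj n) = 2) \<and>
         (\<forall>n\<ge>1. circle_graph (ladder_V n) (ladder_adj n))"
proof (intro conjI allI impI)
  fix n :: nat assume "n \<ge> 2"
  show rep2: "k_word_representable (ladder_V n) (ladder_adj n) 2"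
    using k_word_representable_2_if_permutation_model[OF finite_ladder_V permutation_model_ladder] .
  have "(1, False) \<in> ladder_V n" "(2, True) \<in> ladder_V n"
    using \<open>n \<ge> 2\<close> by (auto simp: ladder_V_def)
  moreover have "\<not> ladder_adj n (1, False) (2, True)" by (simp add: ladder_adj_def)
  ultimately show "rep_number (ladder_V n) (ladder_adj n) = 2"
    by (intro rep_number_eq_2[OF rep2]) auto
next
  fix n :: nat
  have "strict_mono real_of_int" by (rule strict_monoI) simp
  then show "circle_graph (ladder_V n) (ladder_adj n)"
    using circle_graph_if_permutation_model[OF finite_ladder_V]
      permutation_model_comp_strict_mono[OF _ permutation_model_ladder] by blast
qed

end
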